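(* Let $A$ be a closed $\forall^+$ type of system $\mathcal F$ which is provable, i.e. there is a closed $\lambda$-term $u$ with $\vdash_{\mathcal F} u : A$. Then $A$ is a data type: $|A|\neq\emptyset$ and every $t\in|A|$ $\beta$-reduces to a closed $\lambda$-term.
   Context: $\lambda$-terms are those of the untyped $\lambda$-calculus ($\Lambda$ their set); $u\succ_f v$ means $v$ is obtained from $u$ by weak head reduction (repeatedly reducing the redex $(\lambda x u)v$ in a term $(\lambda x u)vv_1\dots v_m$). Types of system $\mathcal F$: built from type variables with $\rightarrow$, $\forall$; only proper types (in every $\forall XA$, $X$ occurs free in $A$). Typing: (ax) $\Gamma \vdash x_i : A_i$ for $x_i:A_i\in\Gamma$; ($\rightarrow_i$) from $\Gamma, x:B \vdash t : C$ infer $\Gamma \vdash \lambda x t : B \rightarrow C$; ($\rightarrow_e$) from $\Gamma \vdash u : B\rightarrow C$, $\Gamma \vdash v : B$ infer $\Gamma \vdash (u)v : C$; ($\forall_i$) from $\Gamma \vdash t : A$, $X$ not free in $\Gamma$, infer $\Gamma \vdash t : \forall X A$; ($\forall_e$) from $\Gamma \vdash t : \forall X A$ infer $\Gamma \vdash t : A[C/X]$. A set $G\subseteq\Lambda$ is saturated if $u\in G$ and $t\succ_f u$ imply $t\in G$. For $G,G'\subseteq\Lambda$, $G\rightarrow G'=\{u : (u)t\in G' \text{ for all } t\in G\}$. An interpretation $I$ maps each type variable to a saturated set; $|A\rightarrow B|_I=|A|_I\rightarrow|B|_I$, $|\forall XA|_I=\bigcap\{|A|_{I[X\leftarrow G]}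 : G \text{ saturated}\}$, and $|A|=\bigcap_I|A|_I$. The classes $\forall^+$, $\forall^-$: every type variable is both; if $A$ is $\forall^+$ (resp. $\forall^-$) and $B$ is $\forall^-$ (resp. $\forall^+$) then $B\rightarrow A$ is $\forall^+$ (resp. $\forall^-$); if $A$ is $\forall^+$ and $X$ is free in $A$ then $\forall XA$ is $\forall^+$. *)

theory Defs
  imports Main
begin

datatype lterm = LVar nat | LApp lterm lterm | LLam lterm

fun lt_lift :: "lterm \<Rightarrow> nat \<Rightarrow> lterm" where
  "lt_lift (LVar i) k = (if i < k then LVar i else LVar (Suc i))"
| "lt_lift (LApp s t) k = LApp (lt_lift s k) (lt_lift t k)"
| "lt_lift (LLam t) k = LLam (lt_lift t (Suc k))"

fun lt_subst :: "lterm \<Rightarrow> lterm \<Rightarrow> nat \<Rightarrow> lterm" where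
  "lt_subst (LVar i) s k = (if k < i then LVar (i - 1) else if i = k then s else LVar i)"
| "lt_subst (LApp t u) s k = LApp (lt_subst t s k) (lt_subst u s k)"
| "lt_subst (LLam t) s k = LLam (lt_subst t (lt_lift s 0) (Suc k))"

fun lt_closed_at :: "nat \<Rightarrow> lterm \<Rightarrow> bool" where
  "lt_closed_at k (LVar i) = (i < k)"
| "lt_closed_at k (LApp s t) = (lt_closed_at k s \<and> lt_closed_at k t)"
| "lt_closed_at k (LLam t) = lt_closed_at (Suc k) t"

definition lt_closed :: "lterm \<Rightarrow> bool" where
  "lt_closed t = lt_closed_at 0 t"

inductive beta :: "lterm \<Rightarrow> lterm \<Rightarrow> bool" where
  beta_redex: "beta (LApp (LLam t) s) (lt_subst t s 0)"
| beta_appL: "beta s s' \<Longrightarrow> beta (LApp s t) (LApp s' t)"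
| beta_appR: "beta t t' \<Longrightarrow> beta (LApp s t) (LApp s t')"
| beta_abs: "beta t t' \<Longrightarrow> beta (LLam t) (LLam t')"

inductive whstep :: "lterm \<Rightarrow> lterm \<Rightarrow> bool" where
  wh_redex: "whstep (LApp (LLam t) s) (lt_subst t s 0)"
| wh_app: "whstep s s' \<Longrightarrow> whstep (LApp s t) (LApp s' t)"

definition whred :: "lterm \<Rightarrow> lterm \<Rightarrow> bool" where
  "whred = whstep\<^sup>*\<^sup>*"

datatype ty = TVar nat | Arr ty ty | All ty

fun ty_lift :: "ty \<Rightarrow> nat \<Rightarrow> ty" where
  "ty_lift (TVar i) k = (if i < k then TVar i else TVar (Suc i))"
| "ty_lift (Arr A B) k = Arr (ty_lift A k) (ty_lift B k)"
| "ty_lift (All A) k = All (ty_lift A (Suc k))"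

fun ty_subst :: "ty \<Rightarrow> ty \<Rightarrow> nat \<Rightarrow> ty" where
  "ty_subst (TVar i) C k = (if k < i then TVar (i - 1) else if i = k then C else TVar i)"
| "ty_subst (Arr A B) C k = Arr (ty_subst A C k) (ty_subst B C k)"
| "ty_subst (All A) C k = All (ty_subst A (ty_lift C 0) (Suc k))"

fun ty_free :: "nat \<Rightarrow> ty \<Rightarrow> bool" where
  "ty_free k (TVar i) = (i = k)"
| "ty_free k (Arr A B) = (ty_free k A \<or> ty_free k B)"
| "ty_free k (All A) = ty_free (Suc k) A"

fun ty_closed_at :: "nat \<Rightarrow> ty \<Rightarrow> bool" where
  "ty_closed_at k (TVar i) = (i < k)"
| "ty_closed_at k (Arr A B) = (ty_closed_at k A \<and> ty_closed_at k B)"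
| "ty_closed_at k (All A) = ty_closed_at (Suc k) A"

definition ty_closed :: "ty \<Rightarrow> bool" where
  "ty_closed A = ty_closed_at 0 A"

fun proper :: "ty \<Rightarrow> bool" where
  "proper (TVar i) = True"
| "proper (Arr A B) = (proper A \<and> proper B)"
| "proper (All A) = (proper A \<and> ty_free 0 A)"

inductive typing :: "ty list \<Rightarrow> lterm \<Rightarrow> ty \<Rightarrow> bool" where
  T_ax: "i < length \<Gamma> \<Longrightarrow> typing \<Gamma> (LVar i) (\<Gamma> ! i)"
| T_absI: "proper B \<Longrightarrow> typing (B # \<Gamma>) t C \<Longrightarrow> typing \<Gamma> (LLam t) (Arr B C)"
| T_appE: "typing \<Gamma> u (Arr B C) \<Longrightarrow> typing \<Gamma> v B \<Longrightarrow> typing \<Gamma> (LApp u v) C"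
| T_allI: "typing (map (\<lambda>T. ty_lift T 0) \<Gamma>) t A \<Longrightarrow> ty_free 0 A \<Longrightarrow> typing \<Gamma> t (All A)"
| T_allE: "typing \<Gamma> t (All A) \<Longrightarrow> proper C \<Longrightarrow> typing \<Gamma> t (ty_subst A C 0)"

definition saturated :: "lterm set \<Rightarrow> bool" where
  "saturated G \<longleftrightarrow> (\<forall>u t. u \<in> G \<longrightarrow> whred t u \<longrightarrow> t \<in> G)"

definition arrow_set :: "lterm set \<Rightarrow> lterm set \<Rightarrow> lterm set" where
  "arrow_set G G' = {u. \<forall>t\<in>G. LApp u t \<in> G'}"

definition shift_interp :: "lterm set \<Rightarrow> (nat \<Rightarrow> lterm set) \<Rightarrow> nat \<Rightarrow> lterm set" where
  "shift_interp G I = (\<lambda>n. case n of 0 \<Rightarrow> G | Suc m \<Rightarrow> I m)"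

fun interp :: "ty \<Rightarrow> (nat \<Rightarrow> lterm set) \<Rightarrow> lterm set" where
  "interp (TVar n) I = I n"
| "interp (Arr A B) I = arrow_set (interp A I) (interp B I)"
| "interp (All A) I = \<Inter> {interp A (shift_interp G I) | G. saturated G}"

definition realize :: "ty \<Rightarrow> lterm set" where
  "realize A = \<Inter> {interp A I | I. \<forall>n. saturated (I n)}"

inductive fpos :: "ty \<Rightarrow> bool" and fneg :: "ty \<Rightarrow> bool" where
  pos_var: "fpos (TVar i)"
| neg_var: "fneg (TVar i)"
| pos_arr: "fpos A \<Longrightarrow> fneg B \<Longrightarrow> fpos (Arr B A)"
| neg_arr: "fneg A \<Longrightarrow> fpos B \<Longrightarrow> fneg (Arr B A)"
| pos_all: "fpos A \<Longrightarrow> ty_free 0 A \<Longrightarrow> fpos (All A)"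

end

theory Submission
  imports Defs
begin

text \<open>
  Fix a term \<open>t \<in> |A|\<close> and choose a de Bruijn index \<open>x\<close> that does not occur free in \<open>t\<close>.
  Let \<open>P\<^sub>x\<close> be the set of terms that \<open>\<beta>\<close>-reduce to a term whose only free variable is \<open>x\<close>;
  it is saturated and contains \<open>x\<close>, it is closed under application, and \<open>(t)x \<in> P\<^sub>x\<close>
  implies \<open>t \<in> P\<^sub>x\<close>. Interpreting every type variable by \<open>P\<^sub>x\<close>, an induction on the
  classes shows \<open>|A| \<subseteq> P\<^sub>x\<close> for \<open>\<forall>\<^sup>+\<close> types and \<open>P\<^sub>x \<subseteq> |B|\<close> for \<open>\<forall>\<^sup>-\<close> types. Hence \<open>t\<close>
  reduces to a term with no free variable except \<open>x\<close>; since \<open>x\<close> is not free in \<open>t\<close> and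
  reduction creates no free variables, that term is closed. Nonemptiness of \<open>|A|\<close> is the
  adequacy lemma: a typable closed term belongs to the interpretation of its type.
\<close>

declare lt_subst.simps(1) [simp del]

lemma lt_subst_LVar_eq [simp]: "lt_subst (LVar k) u k = u"
  by (simp add: lt_subst.simps)

lemma lt_subst_LVar_gt [simp]: "i < j \<Longrightarrow> lt_subst (LVar j) u i = LVar (j - 1)"
  by (simp add: lt_subst.simps)

lemma lt_subst_LVar_lt [simp]: "j < i \<Longrightarrow> lt_subst (LVar j) u i = LVar j"
  by (simp add: lt_subst.simps)

lemma lt_lift_lift:
  "i \<le> k \<Longrightarrow> lt_lift (lt_lift t i) (Suc k) = lt_lift (lt_lift t k) i"
  by (induct t arbitrary: i k) auto

lemma lt_lift_subst_le:
  "i \<le> j \<Longrightarrow> lt_lift (lt_subst t s j) i = lt_subst (lt_lift t i) (lt_lift s i) (Suc j)"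
  by (induct t arbitrary: i j s) (auto simp: lt_subst.simps lt_lift_lift)

lemma lt_subst_lift [simp]: "lt_subst (lt_lift t k) s k = t"
  by (induct t arbitrary: k s) simp_all

lemma lt_subst_subst:
  "i \<le> j \<Longrightarrow> lt_subst (lt_subst t (lt_lift v i) (Suc j)) (lt_subst u v j) i
     = lt_subst (lt_subst t u i) v j"
  by (induct t arbitrary: i j u v)
    (simp_all add: diff_Suc lt_subst.simps lt_lift_lift [symmetric] lt_lift_subst_le
      split: nat.split)

lemma rtranclp_beta_LLam: "beta\<^sup>*\<^sup>* s s' \<Longrightarrow> beta\<^sup>*\<^sup>* (LLam s) (LLam s')"
  by (induct rule: rtranclp_induct) (blast intro: rtranclp.rtrancl_into_rtrancl beta.intros)+

lemma rtranclp_beta_LApp: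
  assumes "beta\<^sup>*\<^sup>* s s'" and "beta\<^sup>*\<^sup>* t t'"
  shows "beta\<^sup>*\<^sup>* (LApp s t) (LApp s' t')"
proof -
  have "beta\<^sup>*\<^sup>* (LApp s t) (LApp s' t)"
    using assms(1)
    by (induct rule: rtranclp_induct) (blast intro: rtranclp.rtrancl_into_rtrancl beta.intros)+
  also have "beta\<^sup>*\<^sup>* (LApp s' t) (LApp s' t')"
    using assms(2)
    by (induct rule: rtranclp_induct) (blast intro: rtranclp.rtrancl_into_rtrancl beta.intros)+
  finally show ?thesis .
qed

lemma whred_imp_rtranclp_beta:
  assumes "whred s t"
  shows "beta\<^sup>*\<^sup>* s t"
proof -
  have "whstep \<le> beta"
    by (auto elim: whstep.induct intro: beta.intros)
  with assms show ?thesis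
    unfolding whred_def by (metis mono_rtranclp predicate2D)
qed

lemma whred_LApp: "whred s s' \<Longrightarrow> whred (LApp s t) (LApp s' t)"
  unfolding whred_def
  by (induct rule: rtranclp_induct) (auto intro: wh_app rtranclp.rtrancl_into_rtrancl)

lemma lt_closed_at_mono: "lt_closed_at k t \<Longrightarrow> k \<le> k' \<Longrightarrow> lt_closed_at k' t"
  by (induct t arbitrary: k k') auto

lemma ex_lt_closed_at: "\<exists>k. lt_closed_at k t"
proof (induct t)
  case (LVar i)
  have "lt_closed_at (Suc i) (LVar i)" by simp
  then show ?case ..
next
  case (LApp t1 t2)
  then obtain k1 k2 where "lt_closed_at k1 t1" "lt_closed_at k2 t2" by blast
  then have "lt_closed_at (max k1 k2) (LApp t1 t2)" by (auto intro: lt_closed_at_mono)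
  then show ?case ..
next
  case (LLam t)
  then obtain k where "lt_closed_at k t" by blast
  then have "lt_closed_at k (LLam t)" by (auto intro: lt_closed_at_mono)
  then show ?case ..
qed

lemma lt_closed_at_lift: "lt_closed_at k s \<Longrightarrow> lt_closed_at (Suc k) (lt_lift s j)"
  by (induct s arbitrary: k j) auto

lemma lt_closed_at_subst:
  "lt_closed_at (Suc k) t \<Longrightarrow> lt_closed_at k s \<Longrightarrow> j \<le> k \<Longrightarrow> lt_closed_at k (lt_subst t s j)"
  by (induct t arbitrary: k s j) (auto simp: lt_subst.simps lt_closed_at_lift)

lemma rtranclp_beta_closed_at: "beta\<^sup>*\<^sup>* s t \<Longrightarrow> lt_closed_at k s \<Longrightarrow> lt_closed_at k t"
proof (induct rule: rtranclp_induct)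
  case (step t t')
  from step(2) step(3)[OF step(4)] show ?case
    by (induct arbitrary: k rule: beta.induct) (auto intro: lt_closed_at_subst)
qed

fun only_free :: "nat \<Rightarrow> nat \<Rightarrow> lterm \<Rightarrow> bool" where
  "only_free x k (LVar i) = (i < k \<or> i = x + k)"
| "only_free x k (LApp s t) = (only_free x k s \<and> only_free x k t)"
| "only_free x k (LLam t) = only_free x (Suc k) t"

lemma only_free_closed_at: "only_free x k t \<Longrightarrow> lt_closed_at (x + k) t \<Longrightarrow> lt_closed_at k t"
  by (induct t arbitrary: k) auto

lemma only_free_subst_LVar:
  "only_free x k (lt_subst s (LVar (x + k)) k) \<Longrightarrow> only_free x (Suc k) s"
proof (induct s arbitrary: k)
  case (LVar i)
  then show ?case by (cases "k < i") (auto simp: lt_subst.simps split: if_splits)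
qed auto

text \<open>Substituting a variable for a variable creates no redex.\<close>

lemma beta_subst_LVar_reflect:
  "beta (lt_subst s (LVar y) k) r \<Longrightarrow> \<exists>s'. beta s s' \<and> r = lt_subst s' (LVar y) k"
proof (induct s arbitrary: y k r)
  case (LVar i)
  have "\<exists>j. lt_subst (LVar i) (LVar y) k = LVar j"
    by (simp add: lt_subst.simps)
  with LVar obtain j where "beta (LVar j) r" by auto
  then show ?case by (cases rule: beta.cases)
next
  case (LLam b)
  from LLam.prems have "beta (LLam (lt_subst b (LVar (Suc y)) (Suc k))) r" by simp
  then obtain r' where r: "r = LLam r'"
    and b: "beta (lt_subst b (LVar (Suc y)) (Suc k)) r'"
    by (cases rule: beta.cases) simp_all
  from LLam.hyps[OF b] obtain b' where "beta b b'" "r' = lt_subst b' (LVar (Suc y)) (Suc k)"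
    by blast
  with r show ?case by (auto intro: beta.intros)
next
  case (LApp s1 s2)
  from LApp.prems have "beta (LApp (lt_subst s1 (LVar y) k) (lt_subst s2 (LVar y) k)) r"
    by simp
  then show ?case
  proof (cases rule: beta.cases)
    case (beta_redex t)
    then obtain b where s1: "s1 = LLam b"
      by (cases s1) (auto simp: lt_subst.simps split: if_splits)
    with beta_redex have "r = lt_subst (lt_subst b s2 0) (LVar y) k"
      using lt_subst_subst[of 0 k b "LVar y" s2] by simp
    with s1 show ?thesis by (auto intro: beta.intros)
  next
    case (beta_appL s')
    from LApp.hyps(1)[OF beta_appL(2)]
    obtain s1' where "beta s1 s1'" "s' = lt_subst s1' (LVar y) k" by blast
    with beta_appL(1) show ?thesis by (auto intro: beta.intros)
  next
    case (beta_appR s')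
    from LApp.hyps(2)[OF beta_appR(2)]
    obtain s2' where "beta s2 s2'" "s' = lt_subst s2' (LVar y) k" by blast
    with beta_appR(1) show ?thesis by (auto intro: beta.intros)
  qed
qed

lemma rtranclp_beta_subst_LVar_reflect:
  "beta\<^sup>*\<^sup>* (lt_subst s (LVar y) k) r \<Longrightarrow> \<exists>s'. beta\<^sup>*\<^sup>* s s' \<and> r = lt_subst s' (LVar y) k"
proof (induct rule: rtranclp_induct)
  case (step r r')
  then obtain s' where s': "beta\<^sup>*\<^sup>* s s'" "r = lt_subst s' (LVar y) k" by blast
  with step(2) obtain s'' where "beta s' s''" "r' = lt_subst s'' (LVar y) k"
    using beta_subst_LVar_reflect by blast
  with s'(1) show ?case by (blast intro: rtranclp.rtrancl_into_rtrancl)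
qed blast

text \<open>
  A reduction of \<open>(t)x\<close> either stays inside \<open>t\<close> or, once \<open>t\<close> has become \<open>\<lambda>s\<close>, continues
  in \<open>s[x/0]\<close>; in the latter case reflecting it back to \<open>s\<close> gives a reduct of \<open>t\<close>.
\<close>

lemma rtranclp_beta_LApp_LVar_only_free:
  assumes "beta\<^sup>*\<^sup>* (LApp t (LVar x)) r" and "only_free x 0 r"
  shows "\<exists>t'. beta\<^sup>*\<^sup>* t t' \<and> only_free x 0 t'"
proof -
  have "beta\<^sup>*\<^sup>* a r \<Longrightarrow> a = LApp t (LVar x) \<Longrightarrow> \<exists>t'. beta\<^sup>*\<^sup>* t t' \<and> only_free x 0 t'" for a
  proof (induct arbitrary: t rule: converse_rtranclp_induct)
    case base
    then show ?case using assms(2) by auto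
  next
    case (step a a')
    from step(1,4) have "beta (LApp t (LVar x)) a'" by simp
    then show ?case
    proof (cases rule: beta.cases)
      case (beta_redex s)
      with step(2) obtain s' where s': "beta\<^sup>*\<^sup>* s s'" "r = lt_subst s' (LVar x) 0"
        using rtranclp_beta_subst_LVar_reflect[of s x 0 r] by auto
      with assms(2) have "only_free x 0 (LLam s')"
        using only_free_subst_LVar[of x 0 s'] by simp
      with s' beta_redex show ?thesis by (auto intro: rtranclp_beta_LLam)
    next
      case (beta_appL t')
      with step(3) show ?thesis by (blast intro: converse_rtranclp_into_rtranclp)
    next
      case (beta_appR t')
      from beta_appR(2) show ?thesis by (cases rule: beta.cases)
    qed
  qed
  with assms(1) show ?thesis by blast
qed

subsection \<open>The saturated set of terms reducing to a term with one free variable\<close>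

definition reduces_only_free :: "nat \<Rightarrow> lterm set" where
  "reduces_only_free x = {t. \<exists>t'. beta\<^sup>*\<^sup>* t t' \<and> only_free x 0 t'}"

lemma saturated_reduces_only_free: "saturated (reduces_only_free x)"
  unfolding saturated_def reduces_only_free_def
  by (blast dest: whred_imp_rtranclp_beta intro: rtranclp_trans)

lemma LVar_in_reduces_only_free: "LVar x \<in> reduces_only_free x"
  unfolding reduces_only_free_def by auto

lemma LApp_in_reduces_only_free:
  "s \<in> reduces_only_free x \<Longrightarrow> t \<in> reduces_only_free x \<Longrightarrow> LApp s t \<in> reduces_only_free x"
  unfolding reduces_only_free_def by (auto intro: rtranclp_beta_LApp)

lemma reduces_only_free_LApp_LVar:
  "LApp t (LVar x) \<in> reduces_only_free x \<Longrightarrow> t \<in> reduces_only_free x"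
  unfolding reduces_only_free_def using rtranclp_beta_LApp_LVar_only_free by blast

lemma shift_interp_const: "shift_interp G (\<lambda>_. G) = (\<lambda>_. G)"
  by (rule ext) (simp add: shift_interp_def split: nat.split)

lemma fpos_fneg_interp_reduces_only_free:
  shows "fpos A \<Longrightarrow> interp A (\<lambda>_. reduces_only_free x) \<subseteq> reduces_only_free x"
    and "fneg B \<Longrightarrow> reduces_only_free x \<subseteq> interp B (\<lambda>_. reduces_only_free x)"
proof (induct rule: fpos_fneg.inducts)
  case (pos_arr A B)
  show ?case
  proof
    fix t assume "t \<in> interp (Arr B A) (\<lambda>_. reduces_only_free x)"
    with pos_arr(4) have "LApp t (LVar x) \<in> interp A (\<lambda>_. reduces_only_free x)"
      using LVar_in_reduces_only_free by (auto simp: arrow_set_def)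
    with pos_arr(2) show "t \<in> reduces_only_free x"
      using reduces_only_free_LApp_LVar by blast
  qed
next
  case (neg_arr A B)
  show ?case
  proof
    fix s assume s: "s \<in> reduces_only_free x"
    have "LApp s t \<in> interp A (\<lambda>_. reduces_only_free x)"
      if "t \<in> interp B (\<lambda>_. reduces_only_free x)" for t
      using neg_arr(2,4) s that LApp_in_reduces_only_free by blast
    then show "s \<in> interp (Arr B A) (\<lambda>_. reduces_only_free x)"
      by (simp add: arrow_set_def)
  qed
next
  case (pos_all A)
  have "interp (All A) (\<lambda>_. reduces_only_free x)
          \<subseteq> interp A (shift_interp (reduces_only_free x) (\<lambda>_. reduces_only_free x))"
    unfolding interp.simps using saturated_reduces_only_free by blast
  then have "interp (All A) (\<lambda>_. reduces_only_free x) \<subseteq> interp A (\<lambda>_. reduces_only_free x)"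
    by (simp only: shift_interp_const)
  with pos_all(2) show ?case by blast
qed simp_all

lemma saturated_arrow_set: "saturated G' \<Longrightarrow> saturated (arrow_set G G')"
  unfolding saturated_def arrow_set_def by (blast intro: whred_LApp)

lemma saturated_Inter: "(\<And>G. G \<in> S \<Longrightarrow> saturated G) \<Longrightarrow> saturated (\<Inter> S)"
  unfolding saturated_def by blast

lemma saturated_shift_interp:
  "\<forall>n. saturated (I n) \<Longrightarrow> saturated G \<Longrightarrow> \<forall>n. saturated (shift_interp G I n)"
  by (simp add: shift_interp_def split: nat.split)

lemma saturated_interp: "\<forall>n. saturated (I n) \<Longrightarrow> saturated (interp A I)"
proof (induct A arbitrary: I)
  case (Arr A B)
  then show ?case by (simp add: saturated_arrow_set)
next
  case (All A)
  show ?case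
    unfolding interp.simps by (rule saturated_Inter) (use All saturated_shift_interp in blast)
qed simp

definition drop_interp :: "nat \<Rightarrow> (nat \<Rightarrow> lterm set) \<Rightarrow> nat \<Rightarrow> lterm set" where
  "drop_interp k I = (\<lambda>n. if n < k then I n else I (Suc n))"

definition insert_interp :: "nat \<Rightarrow> lterm set \<Rightarrow> (nat \<Rightarrow> lterm set) \<Rightarrow> nat \<Rightarrow> lterm set" where
  "insert_interp k X I = (\<lambda>n. if n < k then I n else if n = k then X else I (n - 1))"

lemma drop_interp_Suc_shift:
  "drop_interp (Suc k) (shift_interp G I) = shift_interp G (drop_interp k I)"
  by (rule ext) (simp add: drop_interp_def shift_interp_def split: nat.split)

lemma drop_interp_0_shift: "drop_interp 0 (shift_interp G I) = I"
  by (rule ext) (simp add: drop_interp_def shift_interp_def)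

lemma insert_interp_Suc_shift:
  "insert_interp (Suc k) X (shift_interp G I) = shift_interp G (insert_interp k X I)"
  by (rule ext) (simp add: insert_interp_def shift_interp_def split: nat.split)

lemma insert_interp_0: "insert_interp 0 X I = shift_interp X I"
  by (rule ext) (simp add: insert_interp_def shift_interp_def split: nat.split)

lemma interp_ty_lift: "interp (ty_lift A k) I = interp A (drop_interp k I)"
proof (induct A arbitrary: k I)
  case (TVar i)
  then show ?case by (simp add: drop_interp_def)
qed (simp_all add: drop_interp_Suc_shift)

lemma interp_ty_subst: "interp (ty_subst A C k) I = interp A (insert_interp k (interp C I) I)"
proof (induct A arbitrary: k C I)
  case (TVar i)
  then show ?case by (simp add: insert_interp_def)
qed (simp_all add: insert_interp_Suc_shift interp_ty_lift drop_interp_0_shift)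

subsection \<open>Adequacy\<close>

definition exts :: "(nat \<Rightarrow> lterm) \<Rightarrow> nat \<Rightarrow> lterm" where
  "exts \<sigma> = (\<lambda>n. case n of 0 \<Rightarrow> LVar 0 | Suc m \<Rightarrow> lt_lift (\<sigma> m) 0)"

definition scons :: "lterm \<Rightarrow> (nat \<Rightarrow> lterm) \<Rightarrow> nat \<Rightarrow> lterm" where
  "scons v \<sigma> = (\<lambda>n. case n of 0 \<Rightarrow> v | Suc m \<Rightarrow> \<sigma> m)"

fun psubst :: "(nat \<Rightarrow> lterm) \<Rightarrow> lterm \<Rightarrow> lterm" where
  "psubst \<sigma> (LVar i) = \<sigma> i"
| "psubst \<sigma> (LApp s t) = LApp (psubst \<sigma> s) (psubst \<sigma> t)"
| "psubst \<sigma> (LLam t) = LLam (psubst (exts \<sigma>) t)"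

lemma exts_LVar: "exts LVar = LVar"
  by (rule ext) (simp add: exts_def split: nat.split)

lemma psubst_LVar: "psubst LVar t = t"
  by (induct t) (simp_all add: exts_LVar)

lemma lt_subst_exts:
  "(\<lambda>n. lt_subst (exts \<sigma> n) (lt_lift s 0) (Suc k)) = exts (\<lambda>n. lt_subst (\<sigma> n) s k)"
  by (rule ext) (simp add: exts_def lt_lift_subst_le split: nat.split)

lemma lt_subst_psubst: "lt_subst (psubst \<sigma> t) s k = psubst (\<lambda>n. lt_subst (\<sigma> n) s k) t"
  by (induct t arbitrary: \<sigma> s k) (simp_all add: lt_subst_exts)

lemma lt_subst_psubst_exts: "lt_subst (psubst (exts \<sigma>) t) v 0 = psubst (scons v \<sigma>) t"
proof -
  have "(\<lambda>n. lt_subst (exts \<sigma> n) v 0) = scons v \<sigma>"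
    by (rule ext) (simp add: exts_def scons_def split: nat.split)
  then show ?thesis by (simp add: lt_subst_psubst)
qed

lemma saturated_LApp_LLam:
  "saturated G \<Longrightarrow> lt_subst t v 0 \<in> G \<Longrightarrow> LApp (LLam t) v \<in> G"
  unfolding saturated_def whred_def by (blast intro: wh_redex)

lemma typing_psubst_interp:
  "typing \<Gamma> t A \<Longrightarrow> \<forall>n. saturated (I n) \<Longrightarrow> (\<forall>i<length \<Gamma>. \<sigma> i \<in> interp (\<Gamma> ! i) I)
    \<Longrightarrow> psubst \<sigma> t \<in> interp A I"
proof (induct arbitrary: I \<sigma> rule: typing.induct)
  case (T_absI B \<Gamma> t C)
  have "LApp (LLam (psubst (exts \<sigma>) t)) v \<in> interp C I" if v: "v \<in> interp B I" for v
  proof -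
    have "\<forall>i<length (B # \<Gamma>). scons v \<sigma> i \<in> interp ((B # \<Gamma>) ! i) I"
      using v T_absI(5) by (auto simp: scons_def nth_Cons split: nat.split)
    with T_absI(3,4) have "lt_subst (psubst (exts \<sigma>) t) v 0 \<in> interp C I"
      by (simp add: lt_subst_psubst_exts)
    with saturated_interp[OF T_absI(4)] show ?thesis
      by (rule saturated_LApp_LLam)
  qed
  then show ?case by (simp add: arrow_set_def)
next
  case (T_appE \<Gamma> u B C v)
  then show ?case by (auto simp: arrow_set_def)
next
  case (T_allI \<Gamma> t A)
  have "psubst \<sigma> t \<in> interp A (shift_interp G I)" if "saturated G" for G
  proof (rule T_allI(2))
    show "\<forall>n. saturated (shift_interp G I n)"
      using T_allI(4) that by (rule saturated_shift_interp)
    show "\<forall>i<length (map (\<lambda>T. ty_lift T 0) \<Gamma>).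
            \<sigma> i \<in> interp (map (\<lambda>T. ty_lift T 0) \<Gamma> ! i) (shift_interp G I)"
      using T_allI(5) by (simp add: interp_ty_lift drop_interp_0_shift)
  qed
  then show ?case
    unfolding interp.simps by blast
next
  case (T_allE \<Gamma> t A C)
  have "psubst \<sigma> t \<in> interp (All A) I"
    using T_allE(2)[OF T_allE(4,5)] .
  moreover have "saturated (interp C I)"
    using saturated_interp[OF T_allE(4)] .
  ultimately have "psubst \<sigma> t \<in> interp A (shift_interp (interp C I) I)"
    by auto
  then show ?case by (simp add: interp_ty_subst insert_interp_0)
qed simp

lemma typing_Nil_realize: "typing [] u A \<Longrightarrow> u \<in> realize A"
  unfolding realize_def using typing_psubst_interp[where \<sigma> = LVar] by (auto simp: psubst_LVar)

lemma fpos_realize_reduces_closed: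
  assumes "fpos A" and "t \<in> realize A"
  shows "\<exists>t'. beta\<^sup>*\<^sup>* t t' \<and> lt_closed t'"
proof -
  obtain x where x: "lt_closed_at x t" using ex_lt_closed_at by blast
  have "t \<in> interp A (\<lambda>_. reduces_only_free x)"
    using assms(2) saturated_reduces_only_free unfolding realize_def by blast
  with assms(1) have "t \<in> reduces_only_free x"
    using fpos_fneg_interp_reduces_only_free(1) by blast
  then obtain t' where t': "beta\<^sup>*\<^sup>* t t'" "only_free x 0 t'"
    unfolding reduces_only_free_def by blast
  with x have "lt_closed t'"
    using rtranclp_beta_closed_at only_free_closed_at[of x 0 t'] by (simp add: lt_closed_def)
  with t' show ?thesis by blast
qed

theorem theorem2p1p9:
  fixes A :: ty and u :: lterm
  assumes "proper A" and "ty_closed A" and "fpos A"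
    and "lt_closed u" and "typing [] u A"
  shows "realize A \<noteq> {} \<and> (\<forall>t\<in>realize A. \<exists>t'. beta\<^sup>*\<^sup>* t t' \<and> lt_closed t')"
  using typing_Nil_realize[OF assms(5)] fpos_realize_reduces_closed[OF assms(3)] by blast

end
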